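(* For all nonnegative integers $x,y$, with $m=x+y$, $L=2^m$, $M=3^m$, $$H(\mathbf p^\star_{x,y})\ \ge\ \frac{m\,L}{M}\,(\log_2 3-1)\left[\left(\tfrac32\right)^{m}-\tfrac12\right].$$
   Context: Clumpy distribution: let $n_1\ge n_2\ge\dots\ge n_L$ be the list in which, for each $u=0,1,\dots,m$, the value $2^{m-u}$ appears exactly $\binom mu$ times (so $\sum_in_i=3^m=M$); let $\mathbf e_i^\star\in\{0,1\}^L$ have ones in its first $n_i$ positions and zeros elsewhere; $\mathbf p^\star_{x,y}=\frac1M\sum_{i=1}^L\mathbf e_i^\star$, a probability mass function on $[L]$. $H$ denotes Shannon entropy in bits. *)

theory Defs
  imports Complex_Main
begin

definition clumpy_list :: "nat \<Rightarrow> nat list" where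
  "clumpy_list m = concat (map (\<lambda>u. replicate (m choose u) (2 ^ (m - u))) [0..<Suc m])"

definition clumpy_e :: "nat \<Rightarrow> nat \<Rightarrow> nat \<Rightarrow> real" where
  "clumpy_e m i j = (if j < clumpy_list m ! i then 1 else 0)"

text \<open>p*_{x,y} = (1/M) sum_i e_i, with M = 3^m, as a function on positions {0..<L}, L = 2^m.\<close>
definition clumpy_p :: "nat \<Rightarrow> nat \<Rightarrow> nat \<Rightarrow> real" where
  "clumpy_p x y j = (let m = x + y in
      (\<Sum>i<length (clumpy_list m). clumpy_e m i j) / 3 ^ m)"

definition entropy_bits :: "nat \<Rightarrow> (nat \<Rightarrow> real) \<Rightarrow> real" where
  "entropy_bits L p = - (\<Sum>j<L. if p j = 0 then 0 else p j * log 2 (p j))"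

end

theory Submission
  imports Defs
begin

text \<open>Every mass of \<open>p\<^sup>\<star>\<close> is at most \<open>2\<^sup>m/3\<^sup>m\<close>, because each of the \<open>L = 2\<^sup>m\<close> vectors
  \<open>e\<^sub>i\<^sup>\<star>\<close> contributes at most one to a position. A distribution whose masses are all at most
  \<open>q\<close> has entropy at least \<open>-log\<^sub>2 q\<close>, so \<open>H(p\<^sup>\<star>) \<ge> m (log\<^sub>2 3 - 1)\<close>. The claimed bound is
  this quantity times \<open>(2/3)\<^sup>m ((3/2)\<^sup>m - 1/2) = 1 - (2/3)\<^sup>m/2 \<le> 1\<close>.\<close>

lemma entropy_bits_ge_neg_log_max:
  assumes nonneg: "\<And>j. j < L \<Longrightarrow> 0 \<le> p j"
    and bounded: "\<And>j. j < L \<Longrightarrow> p j \<le> q"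
    and total: "(\<Sum>j<L. p j) = 1"
  shows "- log 2 q \<le> entropy_bits L p"
proof -
  have term_ge: "p j * - log 2 q \<le> - (if p j = 0 then 0 else p j * log 2 (p j))"
    if "j < L" for j
  proof (cases "p j = 0")
    case False
    with nonneg that have "0 < p j" by force
    moreover have "log 2 (p j) \<le> log 2 q"
      using \<open>0 < p j\<close> bounded[OF that] by simp
    ultimately show ?thesis
      using False by (simp add: mult_left_mono)
  qed simp
  have "- log 2 q = (\<Sum>j<L. p j) * - log 2 q"
    by (simp add: total)
  also have "\<dots> = (\<Sum>j<L. p j * - log 2 q)"
    by (rule sum_distrib_right)
  also have "\<dots> \<le> entropy_bits L p"
    unfolding entropy_bits_def sum_negf[symmetric] by (intro sum_mono term_ge) simp
  finally show ?thesis .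
qed

lemma length_concat_map_upt:
  "length (concat (map f [0..<Suc m])) = (\<Sum>u\<le>m. length (f u))"
  by (induction m) auto

lemma sum_list_concat_map_upt:
  "sum_list (concat (map f [0..<Suc m])) = (\<Sum>u\<le>m. sum_list (f u :: 'a :: comm_monoid_add list))"
  by (induction m) (simp_all flip: add.assoc)

lemma length_clumpy_list: "length (clumpy_list m) = 2 ^ m"
proof -
  have "length (clumpy_list m) = (\<Sum>u\<le>m. m choose u)"
    unfolding clumpy_list_def length_concat_map_upt by simp
  also have "\<dots> = 2 ^ m" by (rule choose_row_sum)
  finally show ?thesis .
qed

lemma clumpy_list_le: "v \<in> set (clumpy_list m) \<Longrightarrow> v \<le> 2 ^ m"
  unfolding clumpy_list_def by (auto intro: power_increasing)

lemma sum_list_clumpy_list: "sum_list (clumpy_list m) = 3 ^ m"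
proof -
  have "sum_list (clumpy_list m) = (\<Sum>u\<le>m. (m choose u) * 2 ^ (m - u))"
    unfolding clumpy_list_def sum_list_concat_map_upt by (simp add: sum_list_replicate)
  also have "\<dots> = (1 + 2) ^ m"
    using binomial_ring[of "1::nat" 2 m] by simp
  finally show ?thesis by (simp add: numeral_3_eq_3)
qed

lemma sum_clumpy_e_row:
  assumes "i < length (clumpy_list m)"
  shows "(\<Sum>j<2 ^ m. clumpy_e m i j) = real (clumpy_list m ! i)"
proof -
  have "clumpy_list m ! i \<le> 2 ^ m"
    using assms by (intro clumpy_list_le) simp
  then have "{..<2 ^ m} \<inter> {j. j < clumpy_list m ! i} = {..<clumpy_list m ! i}"
    by auto
  then show ?thesis
    by (simp add: clumpy_e_def sum.If_cases)
qed

lemma clumpy_p_nonneg: "0 \<le> clumpy_p x y j"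
  by (simp add: clumpy_p_def clumpy_e_def Let_def sum_nonneg)

lemma clumpy_p_le: "clumpy_p x y j \<le> (2 / 3) ^ (x + y)"
proof -
  let ?m = "x + y"
  have "(\<Sum>i<length (clumpy_list ?m). clumpy_e ?m i j) \<le> (\<Sum>i<length (clumpy_list ?m). 1)"
    by (rule sum_mono) (simp add: clumpy_e_def)
  then have "(\<Sum>i<length (clumpy_list ?m). clumpy_e ?m i j) \<le> 2 ^ ?m"
    by (simp add: length_clumpy_list)
  then show ?thesis
    by (simp add: clumpy_p_def Let_def power_divide divide_right_mono)
qed

lemma sum_clumpy_p: "(\<Sum>j<2 ^ (x + y). clumpy_p x y j) = 1"
proof -
  let ?m = "x + y" and ?xs = "clumpy_list (x + y)"
  have "(\<Sum>j<2 ^ ?m. clumpy_p x y j) = (\<Sum>j<2 ^ ?m. \<Sum>i<length ?xs. clumpy_e ?m i j) / 3 ^ ?m"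
    by (simp add: clumpy_p_def Let_def sum_divide_distrib)
  also have "(\<Sum>j<2 ^ ?m. \<Sum>i<length ?xs. clumpy_e ?m i j) = (\<Sum>i<length ?xs. real (?xs ! i))"
    by (subst sum.swap) (simp add: sum_clumpy_e_row)
  also have "\<dots> = real (sum_list ?xs)"
    by (simp add: sum_list_sum_nth atLeast0LessThan)
  also have "\<dots> = 3 ^ ?m"
    by (simp add: sum_list_clumpy_list)
  finally show ?thesis by simp
qed

theorem mainTheorem11:
  fixes x y :: nat
  shows "entropy_bits (2 ^ (x + y)) (clumpy_p x y) \<ge>
    real (x + y) * 2 ^ (x + y) / 3 ^ (x + y) * (log 2 3 - 1) * ((3/2) ^ (x + y) - 1/2)"
proof -
  define m where "m = x + y"
  have entropy_ge: "real m * (log 2 3 - 1) \<le> entropy_bits (2 ^ m) (clumpy_p x y)"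
  proof -
    have "- log 2 ((2 / 3) ^ m) = real m * (log 2 3 - 1)"
      by (simp add: log_nat_power log_divide algebra_simps)
    then show ?thesis
      using entropy_bits_ge_neg_log_max[of "2 ^ m" "clumpy_p x y" "(2 / 3) ^ m"]
      by (simp add: m_def clumpy_p_nonneg clumpy_p_le sum_clumpy_p)
  qed
  have "(2::real) ^ m / 3 ^ m * ((3/2) ^ m - 1/2) = 1 - (2 / 3) ^ m / 2"
    by (simp add: power_divide field_simps)
  then have factor_le_1: "(2::real) ^ m / 3 ^ m * ((3/2) ^ m - 1/2) \<le> 1"
    by simp
  have "real m * 2 ^ m / 3 ^ m * (log 2 3 - 1) * ((3/2) ^ m - 1/2)
      = real m * (log 2 3 - 1) * ((2::real) ^ m / 3 ^ m * ((3/2) ^ m - 1/2))"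
    by simp
  also have "\<dots> \<le> real m * (log 2 3 - 1)"
    using factor_le_1 by (intro mult_left_le) simp_all
  also note entropy_ge
  finally show ?thesis unfolding m_def .
qed

end
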